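(* Let $d/2<k<d$ be integers. For all $t>0$, $g(t)\big(t\,g''(t)+g'(t)\big)>t\,(g'(t))^2$; consequently the function $t\mapsto t g'(t)/g(t)$ is strictly increasing on $(0,\infty)$.
   Context: $g(t)=\binom dk^{-1}\sum_{j=0}^{d-k}\binom kj\binom{d-k}{j}t^j$. *)

theory Defs
  imports "HOL-Analysis.Analysis"
begin

definition gfun :: "nat \<Rightarrow> nat \<Rightarrow> real \<Rightarrow> real" where
  "gfun d k t = inverse (real (d choose k)) *
     (\<Sum>j=0..d-k. real (k choose j) * real ((d-k) choose j) * t ^ j)"

end

theory Submission
  imports Defs
begin

text \<open>Write \<open>g\<close> as \<open>\<Sum>j\<le>m. w\<^sub>j t\<^sup>j\<close> with \<open>m = d - k \<ge> 1\<close>; the weights are positive because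
  \<open>m < k\<close>. The Euler operator \<open>\<theta> = t d/dt\<close> acts by \<open>\<theta>(\<Sum> w\<^sub>j t\<^sup>j) = \<Sum> j w\<^sub>j t\<^sup>j\<close>, and
  \<open>\<theta>\<^sup>2 g = t (t g'' + g')\<close>. After multiplication by \<open>t\<close> the inequality therefore reads
  \<open>(\<Sum> j p\<^sub>j)\<^sup>2 < (\<Sum> p\<^sub>j)(\<Sum> j\<^sup>2 p\<^sub>j)\<close> with \<open>p\<^sub>j = w\<^sub>j t\<^sup>j > 0\<close>, i.e. the index \<open>j\<close> has positive
  variance under these weights. The inequality is exactly the positivity of the numerator of
  the derivative of \<open>t g'/g\<close>, which gives the monotonicity.\<close>

definition power_sum :: "nat \<Rightarrow> (nat \<Rightarrow> real) \<Rightarrow> real \<Rightarrow> real" where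
  "power_sum m w t = (\<Sum>j\<le>m. w j * t ^ j)"

lemma deriv_power_sum:
  "deriv (power_sum m w) = (\<lambda>t. \<Sum>j\<le>m. w j * real j * t ^ (j - 1))"
proof
  fix t :: real
  show "deriv (power_sum m w) t = (\<Sum>j\<le>m. w j * real j * t ^ (j - 1))"
    unfolding power_sum_def
    by (rule DERIV_imp_deriv) (auto intro!: derivative_eq_intros sum.cong simp: mult_ac)
qed

lemma power_sum_has_real_derivative:
  "(power_sum m w has_real_derivative deriv (power_sum m w) t) (at t)"
  unfolding deriv_power_sum power_sum_def
  by (auto intro!: derivative_eq_intros sum.cong simp: mult_ac)

lemma deriv_power_sum_has_real_derivative:
  "(deriv (power_sum m w) has_real_derivative deriv (deriv (power_sum m w)) t) (at t)"
  unfolding DERIV_deriv_iff_real_differentiable deriv_power_sum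
  by (intro derivative_intros) auto

lemma times_deriv_power_sum:
  "t * deriv (power_sum m w) t = power_sum m (\<lambda>j. real j * w j) t"
  unfolding deriv_power_sum power_sum_def sum_distrib_left
proof (rule sum.cong[OF refl])
  fix j show "t * (w j * real j * t ^ (j - 1)) = real j * w j * t ^ j"
    by (cases j) auto
qed

lemma times_deriv_times_deriv_power_sum:
  "t * (t * deriv (deriv (power_sum m w)) t + deriv (power_sum m w) t)
     = power_sum m (\<lambda>j. (real j)\<^sup>2 * w j) t"
proof -
  have "((\<lambda>s. s * deriv (power_sum m w) s) has_real_derivative
          deriv (power_sum m w) t + t * deriv (deriv (power_sum m w)) t) (at t)"
    by (auto intro!: derivative_eq_intros deriv_power_sum_has_real_derivative)
  moreover have "(\<lambda>s. s * deriv (power_sum m w) s) = power_sum m (\<lambda>j. real j * w j)"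
    using times_deriv_power_sum by blast
  ultimately have "deriv (power_sum m (\<lambda>j. real j * w j)) t
                     = t * deriv (deriv (power_sum m w)) t + deriv (power_sum m w) t"
    by (metis DERIV_imp_deriv add.commute)
  then show ?thesis
    using times_deriv_power_sum[of t m "\<lambda>j. real j * w j"]
    by (simp add: power2_eq_square mult.assoc)
qed

lemma weighted_variance_pos:
  fixes w :: "nat \<Rightarrow> real"
  assumes "m \<ge> 1" and "\<And>j. j \<le> m \<Longrightarrow> w j > 0"
  shows "(\<Sum>j\<le>m. real j * w j)\<^sup>2 < (\<Sum>j\<le>m. w j) * (\<Sum>j\<le>m. (real j)\<^sup>2 * w j)"
proof -
  have w_nonneg: "j \<le> m \<Longrightarrow> w j \<ge> 0" for j
    using assms(2) by (simp add: less_imp_le)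
  have expand: "w i * w j * (real i - real j)\<^sup>2
      = ((real i)\<^sup>2 * w i) * w j + w i * ((real j)\<^sup>2 * w j) - 2 * ((real i * w i) * (real j * w j))"
    for i j by (simp add: power2_eq_square algebra_simps)
  have "0 < (\<Sum>i\<le>m. \<Sum>j\<le>m. w i * w j * (real i - real j)\<^sup>2)"
  proof (rule sum_pos2[where i=0])
    show "0 < (\<Sum>j\<le>m. w 0 * w j * (real 0 - real j)\<^sup>2)"
      using assms by (intro sum_pos2[where i=m]) (auto simp: w_nonneg)
  qed (auto intro!: sum_nonneg simp: w_nonneg)
  also have "\<dots> = 2 * ((\<Sum>j\<le>m. w j) * (\<Sum>j\<le>m. (real j)\<^sup>2 * w j) - (\<Sum>j\<le>m. real j * w j)\<^sup>2)"
    unfolding expand sum.distrib sum_subtractf sum_distrib_left[symmetric] sum_distrib_right[symmetric]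
    by (simp add: power2_eq_square algebra_simps sum_distrib_left sum_distrib_right)
  finally show ?thesis by simp
qed

lemma power_sum_moment_ineq:
  assumes "m \<ge> 1" and "\<And>j. j \<le> m \<Longrightarrow> w j > 0" and "t > 0"
  shows "(power_sum m (\<lambda>j. real j * w j) t)\<^sup>2
           < power_sum m w t * power_sum m (\<lambda>j. (real j)\<^sup>2 * w j) t"
  using weighted_variance_pos[of m "\<lambda>j. w j * t ^ j"] assms
  unfolding power_sum_def by (simp add: mult.assoc)

lemma power_sum_euler_ineq:
  assumes "m \<ge> 1" and "\<And>j. j \<le> m \<Longrightarrow> w j > 0" and "t > 0"
  shows "power_sum m w t * (t * deriv (deriv (power_sum m w)) t + deriv (power_sum m w) t)
           > t * (deriv (power_sum m w) t)\<^sup>2"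
proof -
  have "t * (t * (deriv (power_sum m w) t)\<^sup>2) = (power_sum m (\<lambda>j. real j * w j) t)\<^sup>2"
    by (simp add: times_deriv_power_sum[symmetric] power2_eq_square algebra_simps)
  also have "\<dots> < power_sum m w t * power_sum m (\<lambda>j. (real j)\<^sup>2 * w j) t"
    by (rule power_sum_moment_ineq[OF assms])
  also have "\<dots> = t * (power_sum m w t * (t * deriv (deriv (power_sum m w)) t + deriv (power_sum m w) t))"
    by (metis times_deriv_times_deriv_power_sum mult.left_commute)
  finally show ?thesis
    using \<open>t > 0\<close> by (rule mult_less_cancel_left_pos[THEN iffD1, rotated])
qed


lemma strict_mono_on_times_deriv_divide:
  fixes f :: "real \<Rightarrow> real"
  assumes f': "\<And>t. t > 0 \<Longrightarrow> (f has_real_derivative deriv f t) (at t)"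
    and f'': "\<And>t. t > 0 \<Longrightarrow> (deriv f has_real_derivative deriv (deriv f) t) (at t)"
    and pos: "\<And>t. t > 0 \<Longrightarrow> f t > 0"
    and ineq: "\<And>t. t > 0 \<Longrightarrow> f t * (t * deriv (deriv f) t + deriv f t) > t * (deriv f t)\<^sup>2"
  shows "strict_mono_on {0<..} (\<lambda>t. t * deriv f t / f t)"
proof (rule strict_mono_onI)
  fix x y :: real
  assume "x \<in> {0<..}" "y \<in> {0<..}" "x < y"
  show "x * deriv f x / f x < y * deriv f y / f y"
  proof (rule DERIV_pos_imp_increasing[OF \<open>x < y\<close>])
    fix t assume "x \<le> t"
    with \<open>x \<in> {0<..}\<close> have "t > 0" by simp
    have "((\<lambda>t. t * deriv f t / f t) has_real_derivative
            (f t * (t * deriv (deriv f) t + deriv f t) - t * (deriv f t)\<^sup>2) / (f t)\<^sup>2) (at t)"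
      using f'[OF \<open>t > 0\<close>] f''[OF \<open>t > 0\<close>] pos[OF \<open>t > 0\<close>]
      by (auto intro!: derivative_eq_intros simp: power2_eq_square field_simps)
    moreover have "(f t * (t * deriv (deriv f) t + deriv f t) - t * (deriv f t)\<^sup>2) / (f t)\<^sup>2 > 0"
      using ineq[OF \<open>t > 0\<close>] pos[OF \<open>t > 0\<close>] by simp
    ultimately show "\<exists>D. ((\<lambda>t. t * deriv f t / f t) has_real_derivative D) (at t) \<and> 0 < D"
      by blast
  qed
qed

lemma gfun_eq_power_sum:
  "gfun d k = power_sum (d - k) (\<lambda>j. real (k choose j) * real ((d - k) choose j) / real (d choose k))"
  by (auto simp: gfun_def power_sum_def atLeast0AtMost sum_distrib_left field_simps intro!: sum.cong)

theorem lemma16: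
  fixes d k :: nat
  assumes "real d / 2 < real k" and "k < d"
  shows "(\<forall>t::real. t > 0 \<longrightarrow>
           gfun d k t * (t * deriv (deriv (gfun d k)) t + deriv (gfun d k) t)
             > t * (deriv (gfun d k) t)^2)
         \<and> strict_mono_on {0<..} (\<lambda>t. t * deriv (gfun d k) t / gfun d k t)"
proof -
  define w where "w j = real (k choose j) * real ((d - k) choose j) / real (d choose k)" for j
  have g: "gfun d k = power_sum (d - k) w"
    unfolding w_def by (rule gfun_eq_power_sum)
  have "d - k \<ge> 1" using assms(2) by simp
  have w_pos: "w j > 0" if "j \<le> d - k" for j
    using that assms by (auto simp: w_def)
  have ineq: "gfun d k t * (t * deriv (deriv (gfun d k)) t + deriv (gfun d k) t)
                > t * (deriv (gfun d k) t)\<^sup>2" if "t > 0" for t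
    unfolding g using \<open>d - k \<ge> 1\<close> w_pos that by (rule power_sum_euler_ineq)
  have "strict_mono_on {0<..} (\<lambda>t. t * deriv (gfun d k) t / gfun d k t)"
  proof (rule strict_mono_on_times_deriv_divide[OF _ _ _ ineq])
    show "gfun d k t > 0" if "t > 0" for t
      unfolding g power_sum_def using w_pos that
      by (intro sum_pos2[where i=0]) (auto intro!: less_imp_le)
  qed (simp_all add: g power_sum_has_real_derivative deriv_power_sum_has_real_derivative)
  with ineq show ?thesis by blast
qed

end
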